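(* Let $r,s,t,a,b,c$ be real numbers with $t\neq0$, and let $M_{H,n}^{(3)}$, $M_{h,n}^{(3)}$ be the matrix sequences defined in the context. Then for every $n\ge0$, $$\big(M_{H,n+1}^{(3)}\big)^{2}=\big(M_{H,1}^{(3)}\big)^{2}M_{h,2n}^{(3)}=M_{H,1}^{(3)}M_{H,2n+1}^{(3)},\qquad \big(M_{H,n+1}^{(3)}\big)^{3}=\big(M_{H,1}^{(3)}\big)^{3}M_{h,3n}^{(3)}=\big(M_{H,1}^{(3)}\big)^{2}M_{H,3n+1}^{(3)}.$$
   Context: The third-order Horadam matrix sequence is the sequence of $3\times3$ matrices defined by $M_{H,n+3}^{(3)}=rM_{H,n+2}^{(3)}+sM_{H,n+1}^{(3)}+tM_{H,n}^{(3)}$ ($n\ge0$) with $M_{H,0}^{(3)}=\begin{pmatrix} b & c-rb & ta\\ a & b-ra & c-rb-sa\\ \frac{1}{t}(c-rb-sa) & a-\frac{r}{t}(c-rb-sa) & \frac1t\big(-sc+(t+rs)b+(s^2-rt)a\big)\end{pmatrix}$, $M_{H,1}^{(3)}=\begin{pmatrix} c & sb+ta & tb\\ b & c-rb & ta\\ a & b-ra & c-rb-sa\end{pmatrix}$, $M_{H,2}^{(3)}=\begin{pmatrix} rc+sb+ta & sc+tb & tc\\ c & sb+ta & tb\\ b & c-rb & ta\end{pmatrix}$. The generalized Tribonacci matrix sequence satisfies the same recurrence with $M_{h,0}^{(3)}=I_3$, $M_{h,1}^{(3)}=\begin{pmatrix} r&s&t\\1&0&0\\0&1&0\end{pmatrix}$,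 $M_{h,2}^{(3)}=\begin{pmatrix} r^2+s&rs+t&rt\\ r&s&t\\ 1&0&0\end{pmatrix}$. *)

theory Defs
  imports "HOL-Analysis.Analysis"
begin

definition mat3 :: "real \<Rightarrow> real \<Rightarrow> real \<Rightarrow> real \<Rightarrow> real \<Rightarrow> real \<Rightarrow> real \<Rightarrow> real \<Rightarrow> real \<Rightarrow> real^3^3" where
  "mat3 a11 a12 a13 a21 a22 a23 a31 a32 a33 =
     vector [vector [a11, a12, a13], vector [a21, a22, a23], vector [a31, a32, a33]]"

fun MH :: "real \<Rightarrow> real \<Rightarrow> real \<Rightarrow> real \<Rightarrow> real \<Rightarrow> real \<Rightarrow> nat \<Rightarrow> real^3^3" where
  "MH r s t a b c 0 = mat3
      b (c - r * b) (t * a)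
      a (b - r * a) (c - r * b - s * a)
      ((c - r * b - s * a)/t) (a - (r/t)*(c - r * b - s * a)) ((-s * c + (t + r * s) * b + (s * s - r * t) * a)/t)"
| "MH r s t a b c (Suc 0) = mat3
      c (s * b + t * a) (t * b)
      b (c - r * b) (t * a)
      a (b - r * a) (c - r * b - s * a)"
| "MH r s t a b c (Suc (Suc 0)) = mat3
      (r * c + s * b + t * a) (s * c + t * b) (t * c)
      c (s * b + t * a) (t * b)
      b (c - r * b) (t * a)"
| "MH r s t a b c (Suc (Suc (Suc n))) =
      r *\<^sub>R MH r s t a b c (Suc (Suc n)) + s *\<^sub>R MH r s t a b c (Suc n) + t *\<^sub>R MH r s t a b c n"

fun Mh :: "real \<Rightarrow> real \<Rightarrow> real \<Rightarrow> nat \<Rightarrow> real^3^3" where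
  "Mh r s t 0 = mat 1"
| "Mh r s t (Suc 0) = mat3 r s t 1 0 0 0 1 0"
| "Mh r s t (Suc (Suc 0)) = mat3 (r * r + s) (r * s + t) (r * t) r s t 1 0 0"
| "Mh r s t (Suc (Suc (Suc n))) =
      r *\<^sub>R Mh r s t (Suc (Suc n)) + s *\<^sub>R Mh r s t (Suc n) + t *\<^sub>R Mh r s t n"

end

theory Submission
  imports Defs
begin

text \<open>Both matrix sequences satisfy the same linear recurrence, so any identity between
  such sequences need only be checked on three initial terms. This gives
  M_{H,n} = M_{H,0} M_{h,n} (the division by t in M_{H,0} is where t \<noteq> 0 enters) and
  M_{h,m+n} = M_{h,m} M_{h,n}. Since M_{H,1} commutes with M_{h,1}, it commutes with every
  M_{h,n}; writing M_{H,n+1} = M_{H,1} M_{h,n}, the k-th power of M_{H,n+1} becomes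
  M_{H,1}^k M_{h,kn}, and M_{H,1} M_{h,kn} = M_{H,kn+1}.\<close>

definition recurrence3 :: "real \<Rightarrow> real \<Rightarrow> real \<Rightarrow> (nat \<Rightarrow> 'a::real_vector) \<Rightarrow> bool" where
  "recurrence3 r s t F \<longleftrightarrow> (\<forall>n. F (n+3) = r *\<^sub>R F (n+2) + s *\<^sub>R F (n+1) + t *\<^sub>R F n)"

lemma recurrence3_unique:
  assumes "recurrence3 r s t F" "recurrence3 r s t G"
    and "F 0 = G 0" "F 1 = G 1" "F 2 = G 2"
  shows "F n = G n"
proof (induction n rule: less_induct)
  case (less n)
  show ?case
  proof (cases "n < 3")
    case True
    then have "n = 0 \<or> n = 1 \<or> n = 2" by auto
    then show ?thesis using assms(3-5) by auto
  next
    case False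
    then obtain m where "n = m + 3" by (metis add.commute le_add_diff_inverse not_less)
    then show ?thesis using assms(1,2) less by (simp add: recurrence3_def)
  qed
qed

lemma recurrence3_shift: "recurrence3 r s t F \<Longrightarrow> recurrence3 r s t (\<lambda>n. F (Suc n))"
  unfolding recurrence3_def by (metis add_Suc)

lemma recurrence3_matrix_mult_left:
  fixes F :: "nat \<Rightarrow> real^'n^'n"
  assumes "recurrence3 r s t F"
  shows "recurrence3 r s t (\<lambda>n. X ** F n)"
  using assms unfolding recurrence3_def
  by (simp add: matrix_add_ldistrib matrix_scalar_ac scalar_matrix_assoc)

lemma recurrence3_Mh: "recurrence3 r s t (Mh r s t)"
  by (simp add: recurrence3_def numeral_3_eq_3)

lemma recurrence3_MH: "recurrence3 r s t (MH r s t a b c)"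
  by (simp add: recurrence3_def numeral_3_eq_3)

lemma mat3_eq_iff: "mat3 a1 a2 a3 a4 a5 a6 a7 a8 a9 = mat3 b1 b2 b3 b4 b5 b6 b7 b8 b9 \<longleftrightarrow>
  a1 = b1 \<and> a2 = b2 \<and> a3 = b3 \<and> a4 = b4 \<and> a5 = b5 \<and> a6 = b6 \<and> a7 = b7 \<and> a8 = b8 \<and> a9 = b9"
  by (simp add: mat3_def vec_eq_iff forall_3)

lemma mat3_mult: "mat3 a1 a2 a3 a4 a5 a6 a7 a8 a9 ** mat3 b1 b2 b3 b4 b5 b6 b7 b8 b9 =
  mat3 (a1*b1 + a2*b4 + a3*b7) (a1*b2 + a2*b5 + a3*b8) (a1*b3 + a2*b6 + a3*b9)
       (a4*b1 + a5*b4 + a6*b7) (a4*b2 + a5*b5 + a6*b8) (a4*b3 + a5*b6 + a6*b9)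
       (a7*b1 + a8*b4 + a9*b7) (a7*b2 + a8*b5 + a9*b8) (a7*b3 + a8*b6 + a9*b9)"
  by (simp add: mat3_def vec_eq_iff forall_3 matrix_matrix_mult_def sum_3)

lemma mat3_add: "mat3 a1 a2 a3 a4 a5 a6 a7 a8 a9 + mat3 b1 b2 b3 b4 b5 b6 b7 b8 b9 =
  mat3 (a1+b1) (a2+b2) (a3+b3) (a4+b4) (a5+b5) (a6+b6) (a7+b7) (a8+b8) (a9+b9)"
  by (simp add: mat3_def vec_eq_iff forall_3)

lemma mat3_scaleR: "k *\<^sub>R mat3 a1 a2 a3 a4 a5 a6 a7 a8 a9 =
  mat3 (k*a1) (k*a2) (k*a3) (k*a4) (k*a5) (k*a6) (k*a7) (k*a8) (k*a9)"
  by (simp add: mat3_def vec_eq_iff forall_3)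

lemma mat_1_eq_mat3: "mat 1 = mat3 1 0 0 0 1 0 0 0 1"
  by (simp add: mat3_def vec_eq_iff forall_3 mat_def)

lemmas mat3_simps = mat3_eq_iff mat3_mult mat3_add mat3_scaleR mat_1_eq_mat3

lemma Mh_2: "Mh r s t 2 = Mh r s t 1 ** Mh r s t 1"
  by (simp add: numeral_2_eq_2 mat3_simps)

lemma Mh_3: "Mh r s t 3 = Mh r s t 2 ** Mh r s t 1"
  by (simp add: numeral_3_eq_3 numeral_2_eq_2 mat3_simps algebra_simps)

lemma recurrence3_eq_mult_Mh:
  fixes F :: "nat \<Rightarrow> real^3^3"
  assumes "recurrence3 r s t F" "F 1 = F 0 ** Mh r s t 1" "F 2 = F 1 ** Mh r s t 1"
  shows "F n = F 0 ** Mh r s t n"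
proof (rule recurrence3_unique[OF assms(1) recurrence3_matrix_mult_left[OF recurrence3_Mh]])
  show "F 0 = F 0 ** Mh r s t 0"
    by simp
  show "F 1 = F 0 ** Mh r s t 1"
    by (fact assms(2))
  show "F 2 = F 0 ** Mh r s t 2"
    unfolding assms(3) assms(2) Mh_2 matrix_mul_assoc ..
qed

lemma Mh_Suc: "Mh r s t (Suc n) = Mh r s t 1 ** Mh r s t n"
proof -
  have "Mh r s t (Suc 1) = Mh r s t (Suc 0) ** Mh r s t 1"
    using Mh_2 by (simp add: numeral_2_eq_2)
  moreover have "Mh r s t (Suc 2) = Mh r s t (Suc 1) ** Mh r s t 1"
    using Mh_3 by (simp add: numeral_3_eq_3 numeral_2_eq_2)
  ultimately have "Mh r s t (Suc n) = Mh r s t (Suc 0) ** Mh r s t n"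
    using recurrence3_eq_mult_Mh[OF recurrence3_shift[OF recurrence3_Mh]] by blast
  then show ?thesis by simp
qed

lemma Mh_add: "Mh r s t (m + n) = Mh r s t m ** Mh r s t n"
proof (induction m)
  case (Suc m)
  then show ?case
    by (simp only: add_Suc Mh_Suc matrix_mul_assoc)
qed simp

lemma Mh_commute:
  assumes "X ** Mh r s t 1 = Mh r s t 1 ** X"
  shows "X ** Mh r s t n = Mh r s t n ** X"
proof (induction n)
  case (Suc n)
  have "X ** Mh r s t (Suc n) = (X ** Mh r s t 1) ** Mh r s t n"
    by (simp only: Mh_Suc matrix_mul_assoc)
  also have "\<dots> = Mh r s t 1 ** (X ** Mh r s t n)"
    by (simp only: assms matrix_mul_assoc)
  also have "\<dots> = Mh r s t (Suc n) ** X"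
    by (simp only: Suc Mh_Suc matrix_mul_assoc)
  finally show ?case .
qed simp

lemma MH_1: "t \<noteq> 0 \<Longrightarrow> MH r s t a b c 1 = MH r s t a b c 0 ** Mh r s t 1"
  by (simp add: mat3_simps field_simps)

lemma MH_2: "MH r s t a b c 2 = MH r s t a b c 1 ** Mh r s t 1"
  by (simp add: numeral_2_eq_2 mat3_simps algebra_simps)

lemma MH_1_commute_Mh_1: "MH r s t a b c 1 ** Mh r s t 1 = Mh r s t 1 ** MH r s t a b c 1"
  by (simp add: mat3_simps algebra_simps)

lemma MH_eq_MH_0_mult_Mh:
  assumes "t \<noteq> 0"
  shows "MH r s t a b c n = MH r s t a b c 0 ** Mh r s t n"
  using recurrence3_eq_mult_Mh[OF recurrence3_MH MH_1[OF assms] MH_2] .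

lemma MH_Suc:
  assumes "t \<noteq> 0"
  shows "MH r s t a b c (Suc n) = MH r s t a b c 1 ** Mh r s t n"
  by (simp only: MH_eq_MH_0_mult_Mh[OF assms, of _ _ _ _ _ "Suc n"] MH_1[OF assms] Mh_Suc
      matrix_mul_assoc)

lemma matrix_mul_interchange:
  fixes A X Y Z :: "real^'n^'n"
  assumes "Y ** X = X ** Y"
  shows "(A ** Y) ** (X ** Z) = (A ** X) ** (Y ** Z)"
  by (metis assms matrix_mul_assoc)

theorem corollary3p4:
  fixes r s t a b c :: real and n :: nat
  assumes "t \<noteq> 0"
  shows "MH r s t a b c (n+1) ** MH r s t a b c (n+1)
           = (MH r s t a b c 1 ** MH r s t a b c 1) ** Mh r s t (2*n)
       \<and> (MH r s t a b c 1 ** MH r s t a b c 1) ** Mh r s t (2*n)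
           = MH r s t a b c 1 ** MH r s t a b c (2*n+1)
       \<and> MH r s t a b c (n+1) ** MH r s t a b c (n+1) ** MH r s t a b c (n+1)
           = (MH r s t a b c 1 ** MH r s t a b c 1 ** MH r s t a b c 1) ** Mh r s t (3*n)
       \<and> (MH r s t a b c 1 ** MH r s t a b c 1 ** MH r s t a b c 1) ** Mh r s t (3*n)
           = (MH r s t a b c 1 ** MH r s t a b c 1) ** MH r s t a b c (3*n+1)"
proof -
  define P where "P = MH r s t a b c 1"
  have MH_Suc_P: "MH r s t a b c (k+1) = P ** Mh r s t k" for k
    unfolding P_def using MH_Suc[OF assms] by simp
  have commute: "Mh r s t k ** P = P ** Mh r s t k" for k
    unfolding P_def by (rule Mh_commute[OF MH_1_commute_Mh_1, symmetric])
  have square: "(P ** Mh r s t n) ** (P ** Mh r s t n) = (P ** P) ** Mh r s t (2*n)"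
    by (simp only: matrix_mul_interchange[OF commute] mult_2 Mh_add)
  have cube: "((P ** P) ** Mh r s t (2*n)) ** (P ** Mh r s t n) = (P ** P ** P) ** Mh r s t (3*n)"
    using Mh_add[of r s t "2*n" n] by (simp add: matrix_mul_interchange[OF commute])
  show ?thesis
    unfolding P_def[symmetric] MH_Suc_P cube square by (simp add: matrix_mul_assoc)
qed

end
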